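(* Let $(\omega,c)\in\mathbb{R}^2$ satisfy: $\omega>c^2/4$, or $\omega=c^2/4$ and $c>0$. Write $c=2s\sqrt\omega$ with $s\in(-1,1]$, and let $\beta_0=\frac13(2s+\sqrt{3+s^2})$, $\beta_1=1+s$. Then the function $(\beta_0,\beta_1)\ni\eta\mapsto k(\eta)\in(0,1)$ is strictly increasing, where $$k(\eta)^2=\frac{3\eta^2+(\sqrt{f_s(\eta)}-6s)\eta+2(s^2-1)}{2\eta\sqrt{f_s(\eta)}},\qquad f_s(\eta)=-3\eta^2+4s\eta+4.$$
   Context: Equivalently, with $\eta_3=4\sqrt\omega\,\eta\in(\alpha_0,\alpha_1)$, $\alpha_0=\tfrac13(4c+\sqrt{48\omega+4c^2})$, $\alpha_1=4\sqrt\omega+2c$, $A(x)=-3x^2+8cx+64\omega$, $\eta_1=\frac{-\eta_3+4c-\sqrt{A(\eta_3)}}{2}$, $\eta_2=\frac{-\eta_3+4c+\sqrt{A(\eta_3)}}{2}$, one has $k^2=\frac{-\eta_1(\eta_3-\eta_2)}{\eta_3(\eta_2-\eta_1)}$, the elliptic modulus of the periodic solution; $f_s(\eta)>0$ on $(\beta_0,\beta_1)$. *)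

theory Defs
  imports "HOL-Analysis.Analysis"
begin

definition f_s :: "real \<Rightarrow> real \<Rightarrow> real" where
  "f_s s \<eta> = -3 * \<eta>^2 + 4 * s * \<eta> + 4"

definition k_sq :: "real \<Rightarrow> real \<Rightarrow> real" where
  "k_sq s \<eta> = (3 * \<eta>^2 + (sqrt (f_s s \<eta>) - 6 * s) * \<eta> + 2 * (s^2 - 1))
                 / (2 * \<eta> * sqrt (f_s s \<eta>))"

definition k_mod :: "real \<Rightarrow> real \<Rightarrow> real" where
  "k_mod s \<eta> = sqrt (k_sq s \<eta>)"

definition beta0 :: "real \<Rightarrow> real" where
  "beta0 s = (2 * s + sqrt (3 + s^2)) / 3"

definition beta1 :: "real \<Rightarrow> real" where
  "beta1 s = 1 + s"

end

theory Submission imports Defs begin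

text \<open>
  Write \<open>g(\<eta>) = 3\<eta>\<^sup>2 - 6s\<eta> + 2s\<^sup>2 - 2\<close>, so that
  \<open>k(\<eta>)\<^sup>2 = (g(\<eta>) + \<eta>\<surd>f\<^sub>s(\<eta>)) / (2\<eta>\<surd>f\<^sub>s(\<eta>))\<close>.
  The difference \<open>\<eta>\<^sup>2 f\<^sub>s(\<eta>) - g(\<eta>)\<^sup>2\<close> factors as
  \<open>4 (1 + s - \<eta>) (\<eta> - s + 1) (3\<eta>\<^sup>2 - 4s\<eta> + s\<^sup>2 - 1)\<close>, and \<open>\<beta>\<^sub>0\<close> is the larger
  root of the last factor; so on \<open>(\<beta>\<^sub>0, \<beta>\<^sub>1)\<close> we get \<open>|g| < \<eta>\<surd>f\<^sub>s\<close>, which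
  puts \<open>k\<^sup>2\<close> strictly between 0 and 1. Differentiating,
  \<open>(k\<^sup>2)' = 2 (3s\<eta>(1 - (\<eta> - s)\<^sup>2) + 2(1 - s\<^sup>2)) / (\<eta>\<^sup>2 f\<^sub>s(\<eta>)\<^sup>3\<^sup>/\<^sup>2)\<close>,
  whose numerator is positive because \<open>0 < \<eta> - s < 1\<close> and \<open>\<eta> < 1 + s\<close>.
\<close>

lemma beta0_pos_gt:
  fixes s :: real
  assumes "-1 < s" "s \<le> 1"
  shows "0 < beta0 s" "s < beta0 s"
proof -
  have abs_less: "\<bar>s\<bar> < sqrt (3 + s^2)"
    by (rule real_less_rsqrt) (simp add: power2_abs)
  then show "s < beta0 s" unfolding beta0_def by simp
  have "-2 * s < sqrt (3 + s^2)" if "s < 0"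
  proof (rule real_less_rsqrt)
    have "s^2 < 1" using assms that by (simp add: abs_square_less_1)
    then show "(-2 * s)^2 < 3 + s^2" by (simp add: power_mult_distrib)
  qed
  with abs_less show "0 < beta0 s" unfolding beta0_def by (cases "s < 0") auto
qed

lemma k_sq_numerator_sq_less:
  fixes s \<eta> :: real
  assumes s: "-1 < s" "s \<le> 1" and \<eta>: "beta0 s < \<eta>" "\<eta> < beta1 s"
  shows "(3 * \<eta>^2 - 6 * s * \<eta> + 2 * s^2 - 2)^2 < \<eta>^2 * f_s s \<eta>"
proof -
  define r where "r = sqrt (3 + s^2)"
  have r: "0 \<le> r" "r^2 = 3 + s^2" "beta0 s = (2 * s + r) / 3"
    unfolding r_def beta0_def by auto
  have diff: "\<eta>^2 * f_s s \<eta> - (3 * \<eta>^2 - 6 * s * \<eta> + 2 * s^2 - 2)^2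
      = 4 * (1 + s - \<eta>) * (\<eta> - s + 1) * (3 * (\<eta> - (2 * s + r) / 3) * (\<eta> - (2 * s - r) / 3))"
    using r(2) unfolding f_s_def by algebra
  have "0 < \<eta> - s + 1" using beta0_pos_gt[OF s] \<eta> by linarith
  moreover have "0 < 1 + s - \<eta>" using \<eta> unfolding beta1_def by linarith
  moreover have "0 < \<eta> - (2 * s + r) / 3" using \<eta> r by linarith
  moreover have "0 < \<eta> - (2 * s - r) / 3" using \<eta> r by (simp add: field_simps)
  ultimately have "0 < 4 * (1 + s - \<eta>) * (\<eta> - s + 1) * (3 * (\<eta> - (2 * s + r) / 3) * (\<eta> - (2 * s - r) / 3))"
    by (intro mult_pos_pos) auto
  then show ?thesis using diff by linarith
qed

lemma f_s_pos:
  fixes s \<eta> :: real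
  assumes "-1 < s" "s \<le> 1" "beta0 s < \<eta>" "\<eta> < beta1 s"
  shows "0 < f_s s \<eta>"
proof -
  have "0 < \<eta>^2 * f_s s \<eta>"
    using zero_le_power2 k_sq_numerator_sq_less[OF assms] by (rule order.strict_trans1)
  then show ?thesis by (simp add: zero_less_mult_iff)
qed

lemma k_sq_bounds:
  fixes s \<eta> :: real
  assumes \<eta>: "0 < \<eta>" and less: "(3 * \<eta>^2 - 6 * s * \<eta> + 2 * s^2 - 2)^2 < \<eta>^2 * f_s s \<eta>"
  shows "0 < k_sq s \<eta>" "k_sq s \<eta> < 1"
proof -
  define g where "g = 3 * \<eta>^2 - 6 * s * \<eta> + 2 * s^2 - 2"
  define F where "F = sqrt (f_s s \<eta>)"
  have "0 < \<eta>^2 * f_s s \<eta>" using zero_le_power2 less by (rule order.strict_trans1)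
  then have "0 < F" unfolding F_def by (simp add: zero_less_mult_iff)
  with \<eta> have pos: "0 < \<eta> * F" by simp
  have "g^2 < (\<eta> * F)^2"
    using less \<open>0 < F\<close> unfolding g_def F_def by (simp add: power_mult_distrib)
  then have "\<bar>g\<bar> < \<eta> * F"
    using pos power2_less_imp_less[of "\<bar>g\<bar>" "\<eta> * F"] by simp
  moreover have "k_sq s \<eta> = (g + \<eta> * F) / (2 * (\<eta> * F))"
    unfolding k_sq_def F_def[symmetric] g_def by (simp add: algebra_simps)
  ultimately show "0 < k_sq s \<eta>" "k_sq s \<eta> < 1"
    using pos by (auto simp: field_simps)
qed

lemma has_real_derivative_k_sq:
  fixes s \<eta> :: real
  assumes \<eta>: "0 < \<eta>" and f: "0 < f_s s \<eta>"
  shows "(k_sq s has_real_derivative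
    2 * (3 * s * \<eta> * (1 - (\<eta> - s)^2) + 2 * (1 - s^2)) / (\<eta>^2 * f_s s \<eta> * sqrt (f_s s \<eta>)))
    (at \<eta>)"
proof -
  define F where "F = sqrt (f_s s \<eta>)"
  have F: "0 < F" "F^2 = f_s s \<eta>" using f unfolding F_def by auto
  have sqrt_F: "sqrt (4 * s * \<eta> - 3 * \<eta>^2 + 4) = F"
    unfolding F_def f_s_def by (simp add: algebra_simps)
  have deriv: "((\<lambda>x. (3 * x^2 + (sqrt (-3 * x^2 + 4 * s * x + 4) - 6 * s) * x + 2 * (s^2 - 1))
                 / (2 * x * sqrt (-3 * x^2 + 4 * s * x + 4))) has_real_derivative
    2 * (-3 * s * \<eta>^3 + 6 * s^2 * \<eta>^2 + 3 * s * (1 - s^2) * \<eta> + 2 * (1 - s^2))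
      / (F * \<eta>^2 * F^2)) (at \<eta>)"
    using f \<eta> unfolding f_s_def
    apply (auto intro!: derivative_eq_intros)
    apply (simp add: sqrt_F)
    using F(1) \<eta> apply (simp add: field_simps)
    using F(2) unfolding f_s_def by algebra
  have lambda_eq: "(\<lambda>x. (3 * x^2 + (sqrt (-3 * x^2 + 4 * s * x + 4) - 6 * s) * x + 2 * (s^2 - 1))
                 / (2 * x * sqrt (-3 * x^2 + 4 * s * x + 4))) = k_sq s"
    by (simp add: fun_eq_iff k_sq_def f_s_def)
  have numerator_eq: "-3 * s * \<eta>^3 + 6 * s^2 * \<eta>^2 + 3 * s * (1 - s^2) * \<eta> + 2 * (1 - s^2)
      = 3 * s * \<eta> * (1 - (\<eta> - s)^2) + 2 * (1 - s^2)"
    by algebra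
  have denominator_eq: "F * \<eta>^2 * F^2 = \<eta>^2 * f_s s \<eta> * sqrt (f_s s \<eta>)"
    unfolding F(2) by (simp add: F_def)
  show ?thesis using deriv unfolding lambda_eq numerator_eq denominator_eq .
qed

lemma k_sq_derivative_numerator_pos:
  fixes s \<eta> :: real
  assumes "s \<le> 1" "0 < \<eta>" "\<eta> < 1 + s" "s < \<eta>"
  shows "0 < 3 * s * \<eta> * (1 - (\<eta> - s)^2) + 2 * (1 - s^2)"
proof (cases "s \<ge> 0")
  case True
  have "0 < \<eta> * (1 - (\<eta> - s)^2)" using assms by (simp add: abs_square_less_1)
  moreover have "0 \<le> 1 - s^2" using True assms by (simp add: abs_square_le_1)
  ultimately show ?thesis using True
    by (cases "s = 0") (auto simp: mult.assoc intro!: add_pos_nonneg)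
next
  case False
  have "\<eta> * (1 - (\<eta> - s)^2) \<le> \<eta>" using assms by (simp add: mult_left_le)
  with assms have "\<eta> * (1 - (\<eta> - s)^2) \<le> 1 + s" by linarith
  then have "3 * s * (\<eta> * (1 - (\<eta> - s)^2)) \<ge> 3 * s * (1 + s)"
    using False by (intro mult_left_mono_neg) auto
  moreover have "3 * s * (1 + s) + 2 * (1 - s^2) = (1 + s) * (2 + s)" by algebra
  moreover have "(1 + s) * (2 + s) > 0" using assms by auto
  ultimately show ?thesis by (simp add: mult.assoc)
qed

lemma strict_mono_on_k_sq:
  fixes s :: real
  assumes s: "-1 < s" "s \<le> 1"
  shows "strict_mono_on {beta0 s<..<beta1 s} (k_sq s)"
proof (rule strict_mono_onI)
  fix x y assume xy: "x \<in> {beta0 s<..<beta1 s}" "y \<in> {beta0 s<..<beta1 s}" "x < y"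
  show "k_sq s x < k_sq s y"
  proof (rule DERIV_pos_imp_increasing[OF xy(3)])
    fix z assume "x \<le> z" "z \<le> y"
    with xy have z: "beta0 s < z" "z < beta1 s" by auto
    have "0 < z" "s < z" using z beta0_pos_gt[OF s] by linarith+
    moreover have "0 < f_s s z" using f_s_pos[OF s z] .
    moreover have "0 < 3 * s * z * (1 - (z - s)^2) + 2 * (1 - s^2)"
      using k_sq_derivative_numerator_pos \<open>0 < z\<close> \<open>s < z\<close> s z unfolding beta1_def by simp
    ultimately show "\<exists>d. (k_sq s has_real_derivative d) (at z) \<and> 0 < d"
      using has_real_derivative_k_sq by (fastforce intro!: divide_pos_pos)
  qed
qed

theorem proposition3p5:
  fixes \<omega> c s :: real
  assumes hyp: "\<omega> > c^2 / 4 \<or> (\<omega> = c^2 / 4 \<and> c > 0)"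
    and hs: "s \<in> {-1<..1}" and hc: "c = 2 * s * sqrt \<omega>"
  shows "(\<forall>\<eta> \<in> {beta0 s<..<beta1 s}. 0 < k_sq s \<eta> \<and> k_mod s \<eta> \<in> {0<..<1})
         \<and> strict_mono_on {beta0 s<..<beta1 s} (k_mod s)"
proof -
  \<comment> \<open>The hypotheses on \<open>\<omega>\<close> and \<open>c\<close> only serve to define \<open>s\<close>; the claim depends on \<open>s\<close> alone.\<close>
  have s: "-1 < s" "s \<le> 1" using hs by auto
  have k_sq: "0 < k_sq s \<eta> \<and> k_sq s \<eta> < 1" if "\<eta> \<in> {beta0 s<..<beta1 s}" for \<eta>
  proof -
    have "0 < \<eta>" using that beta0_pos_gt[OF s] by simp
    with k_sq_bounds k_sq_numerator_sq_less[OF s] that show ?thesis by simp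
  qed
  have "strict_mono_on {beta0 s<..<beta1 s} (k_mod s)"
    using strict_mono_on_k_sq[OF s] k_sq unfolding strict_mono_on_def k_mod_def
    by (auto intro: real_sqrt_less_mono)
  with k_sq show ?thesis unfolding k_mod_def by auto
qed

end
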